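(* Let $p$ be a prime, let $G$ be a finite $p$-solvable group and let $P$ be a Sylow $p$-subgroup of $G$. If $P$ is abelian and $N_G(P)$ is $p$-supersolvable, then $G$ is $p$-supersolvable.
   Context: All groups are finite. A group is $p$-supersolvable if every chief factor of order divisible by $p$ is cyclic (of order $p$). *)

theory Defs
  imports "HOL-Algebra.Algebra"
begin

definition chief_factor :: "('a, 'b) monoid_scheme \<Rightarrow> 'a set \<Rightarrow> 'a set \<Rightarrow> bool" where
  "chief_factor G H K \<longleftrightarrow> K \<lhd> G \<and> H \<lhd> G \<and> K \<subset> H \<and>
     \<not> (\<exists>N. N \<lhd> G \<and> K \<subset> N \<and> N \<subset> H)"

definition factor_order :: "'a set \<Rightarrow> 'a set \<Rightarrow> nat" where
  "factor_order H K = card H div card K"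

definition p_supersolvable :: "nat \<Rightarrow> ('a, 'b) monoid_scheme \<Rightarrow> bool" where
  "p_supersolvable p G \<longleftrightarrow>
     (\<forall>H K. chief_factor G H K \<and> p dvd factor_order H K \<longrightarrow>
        factor_order H K = p \<and> cyclic_group ((G\<lparr>carrier := H\<rparr>) Mod K))"

definition p_solvable :: "nat \<Rightarrow> ('a, 'b) monoid_scheme \<Rightarrow> bool" where
  "p_solvable p G \<longleftrightarrow>
     (\<exists>Gs. Gs \<noteq> [] \<and> hd Gs = {\<one>\<^bsub>G\<^esub>} \<and> last Gs = carrier G \<and>
        (\<forall>i < length Gs. subgroup (Gs ! i) G) \<and>
        (\<forall>i. Suc i < length Gs \<longrightarrow>
           Gs ! i \<lhd> G\<lparr>carrier := Gs ! Suc i\<rparr> \<and>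
           ((\<exists>k. factor_order (Gs ! Suc i) (Gs ! i) = p ^ k) \<or>
            coprime (factor_order (Gs ! Suc i) (Gs ! i)) p)))"

definition sylow_subgroup :: "nat \<Rightarrow> ('a, 'b) monoid_scheme \<Rightarrow> 'a set \<Rightarrow> bool" where
  "sylow_subgroup p G P \<longleftrightarrow> subgroup P G \<and> card P = p ^ multiplicity p (order G)"

end

theory Submission
  imports Defs
begin

text \<open>
  Let \<open>H/K\<close> be a chief factor of \<open>G\<close> whose order is divisible by \<open>p\<close>. Walking up a
  \<open>p\<close>-solvable series, the largest normal subgroup \<open>W \<supseteq> K\<close> with \<open>|W/K|\<close> a \<open>p\<close>-power
  (resp. prime to \<open>p\<close>) grows, and at the first term meeting \<open>H\<close> outside \<open>K\<close> it swallows \<open>H\<close>;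
  hence \<open>H/K\<close> is a \<open>p\<close>-group and \<open>H = (H \<inter> P) K\<close>. As \<open>P\<close> is abelian, it centralizes
  \<open>H/K\<close>, so the Frattini argument gives \<open>G = C\<^sub>G(H/K) N\<^sub>G(P)\<close>. Consequently every
  \<open>N\<^sub>G(P)\<close>-invariant subgroup \<open>M\<close> between \<open>K \<inter> P\<close> and \<open>H \<inter> P\<close> yields a normal subgroup
  \<open>MK\<close> of \<open>G\<close> between \<open>K\<close> and \<open>H\<close>: thus \<open>(H \<inter> P)/(K \<inter> P)\<close> is a chief factor of
  \<open>N\<^sub>G(P)\<close> of the same order as \<open>H/K\<close>, which is therefore \<open>p\<close>.
\<close>

context group begin

lemma normal_in_subgroup_iff:
  assumes "subgroup B G"
  shows "A \<lhd> G\<lparr>carrier := B\<rparr> \<longleftrightarrow> subgroup A G \<and> A \<subseteq> B \<and> (\<forall>x\<in>B. \<forall>h\<in>A. x \<otimes> h \<otimes> inv x \<in> A)"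
proof -
  interpret B: group "G\<lparr>carrier := B\<rparr>" by (rule subgroup_imp_group[OF assms])
  have s: "subgroup A (G\<lparr>carrier := B\<rparr>) \<longleftrightarrow> subgroup A G \<and> A \<subseteq> B"
    using incl_subgroup[OF assms] subgroup_incl[OF _ assms] subgroup.subset by fastforce
  have "A \<lhd> G\<lparr>carrier := B\<rparr> \<longleftrightarrow> subgroup A (G\<lparr>carrier := B\<rparr>) \<and> (\<forall>x\<in>B. \<forall>h\<in>A. x \<otimes> h \<otimes> inv\<^bsub>G\<lparr>carrier := B\<rparr>\<^esub> x \<in> A)"
    using B.normal_inv_iff by simp
  also have "\<dots> \<longleftrightarrow> subgroup A G \<and> A \<subseteq> B \<and> (\<forall>x\<in>B. \<forall>h\<in>A. x \<otimes> h \<otimes> inv x \<in> A)"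
    using s assms by simp
  finally show ?thesis .
qed

lemma normal_in_carrier_iff: "N \<lhd> G\<lparr>carrier := carrier G\<rparr> \<longleftrightarrow> N \<lhd> G"
  using normal_in_subgroup_iff[OF subgroup_self, of N] normal_inv_iff[of N] subgroup.subset by blast

lemma normal_conj_closed: "N \<lhd> G \<Longrightarrow> g \<in> carrier G \<Longrightarrow> h \<in> N \<Longrightarrow> g \<otimes> h \<otimes> inv g \<in> N"
  unfolding normal_inv_iff by blast

lemma normal_conj_closed': "N \<lhd> G \<Longrightarrow> g \<in> carrier G \<Longrightarrow> h \<in> N \<Longrightarrow> inv g \<otimes> h \<otimes> g \<in> N"
  using normal_conj_closed[of N "inv g" h] by simp

lemma normal_mem_carrier: "N \<lhd> G \<Longrightarrow> h \<in> N \<Longrightarrow> h \<in> carrier G"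
  by (rule subgroup.mem_carrier[OF normal_imp_subgroup])

lemma m_inv_cancel_left [simp]: "x \<in> carrier G \<Longrightarrow> y \<in> carrier G \<Longrightarrow> x \<otimes> (inv x \<otimes> y) = y"
  by (simp add: m_assoc[symmetric])

lemma inv_m_cancel_left [simp]: "x \<in> carrier G \<Longrightarrow> y \<in> carrier G \<Longrightarrow> inv x \<otimes> (x \<otimes> y) = y"
  by (simp add: m_assoc[symmetric])

lemmas group_cancel_simps = m_assoc m_inv_cancel_left inv_m_cancel_left inv_mult_group

lemma set_mult_iff: "x \<in> A <#> B \<longleftrightarrow> (\<exists>a\<in>A. \<exists>b\<in>B. x = a \<otimes> b)"
  unfolding set_mult_def by auto

lemma subset_set_mult_subgroup_right:
  assumes "subgroup B G" "A \<subseteq> carrier G"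
  shows "A \<subseteq> A <#> B"
proof
  fix x assume x: "x \<in> A"
  then have "x = x \<otimes> \<one>" "\<one> \<in> B" using assms subgroup.one_closed by auto
  then show "x \<in> A <#> B" using x unfolding set_mult_iff by blast
qed

lemma subset_set_mult_subgroup_left:
  assumes "subgroup A G" "B \<subseteq> carrier G"
  shows "B \<subseteq> A <#> B"
proof
  fix x assume x: "x \<in> B"
  then have "x = \<one> \<otimes> x" "\<one> \<in> A" using assms subgroup.one_closed by auto
  then show "x \<in> A <#> B" using x unfolding set_mult_iff by blast
qed

lemma set_mult_subset_subgroup:
  assumes "subgroup H G" "A \<subseteq> H" "B \<subseteq> H"
  shows "A <#> B \<subseteq> H"
proof
  fix x assume "x \<in> A <#> B"
  then obtain a b where "a \<in> A" "b \<in> B" "x = a \<otimes> b" unfolding set_mult_iff by blast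
  then show "x \<in> H" using assms subgroup.m_closed[OF assms(1)] by blast
qed

lemma carrier_set_mult_normal:
  assumes "K \<lhd> G"
  shows "carrier G <#> K = carrier G"
proof
  show "carrier G <#> K \<subseteq> carrier G"
    using setmult_subset_G[of "carrier G" K] normal_mem_carrier[OF assms] by blast
  show "carrier G \<subseteq> carrier G <#> K"
    by (rule subset_set_mult_subgroup_right[OF normal_imp_subgroup[OF assms] order.refl])
qed

lemma subgroup_set_mult_normal:
  assumes "K \<lhd> G" "subgroup A G"
  shows "subgroup (A <#> K) G"
proof -
  have "K <#> A = A <#> K"
  proof
    show "K <#> A \<subseteq> A <#> K"
    proof
      fix x assume "x \<in> K <#> A"
      then obtain k a where ka: "k \<in> K" "a \<in> A" "x = k \<otimes> a" by (auto simp: set_mult_iff)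
      have ac: "a \<in> carrier G" and kc: "k \<in> carrier G"
        using subgroup.mem_carrier[OF assms(2) ka(2)] normal_mem_carrier[OF assms(1) ka(1)] .
      have "inv a \<otimes> k \<otimes> a \<in> K" by (rule normal_conj_closed'[OF assms(1) ac ka(1)])
      moreover have "x = a \<otimes> (inv a \<otimes> k \<otimes> a)" using ka ac kc by (simp add: m_assoc[symmetric])
      ultimately show "x \<in> A <#> K" using ka by (auto simp: set_mult_iff)
    qed
  next
    show "A <#> K \<subseteq> K <#> A"
    proof
      fix x assume "x \<in> A <#> K"
      then obtain k a where ka: "k \<in> K" "a \<in> A" "x = a \<otimes> k" by (auto simp: set_mult_iff)
      have ac: "a \<in> carrier G" and kc: "k \<in> carrier G"
        using subgroup.mem_carrier[OF assms(2) ka(2)] normal_mem_carrier[OF assms(1) ka(1)] .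
      have "a \<otimes> k \<otimes> inv a \<in> K" by (rule normal_conj_closed[OF assms(1) ac ka(1)])
      moreover have "x = (a \<otimes> k \<otimes> inv a) \<otimes> a" using ka ac kc by (simp add: m_assoc)
      ultimately show "x \<in> K <#> A" using ka by (auto simp: set_mult_iff)
    qed
  qed
  then show ?thesis using mult_norm_subgroup[OF assms] by simp
qed

lemma normal_set_mult_normal:
  assumes K: "K \<lhd> G" and B: "subgroup B G" and A: "A \<lhd> G\<lparr>carrier := B\<rparr>"
  shows "A <#> K \<lhd> G\<lparr>carrier := B <#> K\<rparr>"
proof -
  have As: "subgroup A G" "A \<subseteq> B" and Ac: "\<And>x h. x \<in> B \<Longrightarrow> h \<in> A \<Longrightarrow> x \<otimes> h \<otimes> inv x \<in> A"
    using A normal_in_subgroup_iff[OF B] by auto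
  have BK: "subgroup (B <#> K) G" by (rule subgroup_set_mult_normal[OF K B])
  have AK: "subgroup (A <#> K) G" by (rule subgroup_set_mult_normal[OF K As(1)])
  have sub: "A <#> K \<subseteq> B <#> K" using As(2) by (simp add: mono_set_mult)
  have "\<forall>x\<in>B <#> K. \<forall>h\<in>A <#> K. x \<otimes> h \<otimes> inv x \<in> A <#> K"
  proof (intro ballI)
    fix x h assume x: "x \<in> B <#> K" and h: "h \<in> A <#> K"
    obtain b k1 where bk: "b \<in> B" "k1 \<in> K" "x = b \<otimes> k1" using x unfolding set_mult_iff by blast
    obtain a k2 where ak: "a \<in> A" "k2 \<in> K" "h = a \<otimes> k2" using h unfolding set_mult_iff by blast
    have bc: "b \<in> carrier G" by (rule subgroup.mem_carrier[OF B bk(1)])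
    have ac: "a \<in> carrier G" by (rule subgroup.mem_carrier[OF As(1) ak(1)])
    have k1c: "k1 \<in> carrier G" by (rule normal_mem_carrier[OF K bk(2)])
    have k2c: "k2 \<in> carrier G" by (rule normal_mem_carrier[OF K ak(2)])
    have a': "b \<otimes> a \<otimes> inv b \<in> A" by (rule Ac[OF bk(1) ak(1)])
    have "inv a \<otimes> k1 \<otimes> a \<otimes> k2 \<otimes> inv k1 \<in> K"
      using normal_conj_closed'[OF K ac bk(2)] ak(2) bk(2) K normal_imp_subgroup
        subgroup.m_closed subgroup.m_inv_closed by metis
    then have k': "b \<otimes> (inv a \<otimes> k1 \<otimes> a \<otimes> k2 \<otimes> inv k1) \<otimes> inv b \<in> K"
      by (rule normal_conj_closed[OF K bc])
    have "x \<otimes> h \<otimes> inv x = (b \<otimes> a \<otimes> inv b) \<otimes> (b \<otimes> (inv a \<otimes> k1 \<otimes> a \<otimes> k2 \<otimes> inv k1) \<otimes> inv b)"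
      using bc ac k1c k2c bk(3) ak(3) by (simp add: group_cancel_simps)
    then show "x \<otimes> h \<otimes> inv x \<in> A <#> K" using a' k' unfolding set_mult_iff by blast
  qed
  then show ?thesis using normal_in_subgroup_iff[OF BK] AK sub by blast
qed

lemma subgroup_conj_image:
  assumes W: "subgroup W G" and z: "z \<in> carrier G"
  shows "subgroup ((\<lambda>w. z \<otimes> w \<otimes> inv z) ` W) G"
proof (rule subgroupI)
  show "(\<lambda>w. z \<otimes> w \<otimes> inv z) ` W \<subseteq> carrier G" using z subgroup.mem_carrier[OF W] by auto
  show "(\<lambda>w. z \<otimes> w \<otimes> inv z) ` W \<noteq> {}" using subgroup.one_closed[OF W] by blast
next
  fix a assume "a \<in> (\<lambda>w. z \<otimes> w \<otimes> inv z) ` W"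
  then obtain w where w: "w \<in> W" "a = z \<otimes> w \<otimes> inv z" by blast
  have "inv a = z \<otimes> inv w \<otimes> inv z" using w subgroup.mem_carrier[OF W] z by (simp add: group_cancel_simps)
  then show "inv a \<in> (\<lambda>w. z \<otimes> w \<otimes> inv z) ` W" using subgroup.m_inv_closed[OF W w(1)] by blast
next
  fix a b assume "a \<in> (\<lambda>w. z \<otimes> w \<otimes> inv z) ` W" "b \<in> (\<lambda>w. z \<otimes> w \<otimes> inv z) ` W"
  then obtain v w where w: "v \<in> W" "a = z \<otimes> v \<otimes> inv z" "w \<in> W" "b = z \<otimes> w \<otimes> inv z" by blast
  have "a \<otimes> b = z \<otimes> (v \<otimes> w) \<otimes> inv z"
    using w subgroup.mem_carrier[OF W] z by (simp add: group_cancel_simps)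
  then show "a \<otimes> b \<in> (\<lambda>w. z \<otimes> w \<otimes> inv z) ` W" using subgroup.m_closed[OF W w(1) w(3)] by blast
qed

lemma card_conj_image:
  assumes "W \<subseteq> carrier G" "z \<in> carrier G"
  shows "card ((\<lambda>w. z \<otimes> w \<otimes> inv z) ` W) = card W"
proof (rule card_image)
  show "inj_on (\<lambda>w. z \<otimes> w \<otimes> inv z) W"
    using assms by (intro inj_onI) (simp add: subset_iff)
qed

lemma mem_normalizer_iff:
  assumes fin: "finite (carrier G)" and Pc: "P \<subseteq> carrier G"
  shows "n \<in> normalizer G P \<longleftrightarrow> n \<in> carrier G \<and> (\<forall>y\<in>P. n \<otimes> y \<otimes> inv n \<in> P)"
proof -
  have "n \<in> normalizer G P \<longleftrightarrow> n \<in> carrier G \<and> (\<lambda>y. n \<otimes> y \<otimes> inv n) ` P = P"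
    unfolding normalizer_def stabilizer_def l_coset_def r_coset_def using Pc by auto
  also have "\<dots> \<longleftrightarrow> n \<in> carrier G \<and> (\<forall>y\<in>P. n \<otimes> y \<otimes> inv n \<in> P)"
  proof (cases "n \<in> carrier G")
    case True
    have "finite P" using Pc fin finite_subset by blast
    moreover have "card ((\<lambda>y. n \<otimes> y \<otimes> inv n) ` P) = card P" by (rule card_conj_image[OF Pc True])
    ultimately show ?thesis using card_seteq[of P "(\<lambda>y. n \<otimes> y \<otimes> inv n) ` P"] by auto
  qed simp
  finally show ?thesis .
qed

lemma card_subgroup_dvd:
  assumes "finite (carrier G)" "subgroup A G" "subgroup B G" "A \<subseteq> B"
  shows "card A dvd card B"
proof -
  interpret B: group "G\<lparr>carrier := B\<rparr>" by (rule subgroup_imp_group[OF assms(3)])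
  have "subgroup A (G\<lparr>carrier := B\<rparr>)" using subgroup_incl assms by blast
  then have "card (rcosets\<^bsub>G\<lparr>carrier := B\<rparr>\<^esub> A) * card A = card B"
    using B.lagrange by (simp add: order_def)
  then show ?thesis by (metis dvd_triv_right)
qed

lemma card_subgroup_gt_0:
  assumes "finite (carrier G)" "subgroup A G"
  shows "card A > 0"
  using assms subgroup.one_closed subgroup.subset
  by (metis card_gt_0_iff empty_iff finite_subset)

lemma card_mult_fibre:
  assumes A: "subgroup A G" and B: "subgroup B G" and a0: "a0 \<in> A" and b0: "b0 \<in> B"
  shows "card {ab \<in> A \<times> B. fst ab \<otimes> snd ab = a0 \<otimes> b0} = card (A \<inter> B)"
proof -
  have Ac: "A \<subseteq> carrier G" and Bc: "B \<subseteq> carrier G" using A B subgroup.subset by auto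
  have a0c: "a0 \<in> carrier G" and b0c: "b0 \<in> carrier G" using a0 b0 Ac Bc by auto
  have "bij_betw (\<lambda>c. (a0 \<otimes> c, inv c \<otimes> b0)) (A \<inter> B) {ab \<in> A \<times> B. fst ab \<otimes> snd ab = a0 \<otimes> b0}"
  proof (rule bij_betw_byWitness[where f' = "\<lambda>ab. inv a0 \<otimes> fst ab"])
    show "\<forall>c\<in>A \<inter> B. inv a0 \<otimes> fst (a0 \<otimes> c, inv c \<otimes> b0) = c" using a0c Ac by auto
    show "\<forall>ab\<in>{ab \<in> A \<times> B. fst ab \<otimes> snd ab = a0 \<otimes> b0}.
        (a0 \<otimes> (inv a0 \<otimes> fst ab), inv (inv a0 \<otimes> fst ab) \<otimes> b0) = ab"
    proof
      fix ab assume "ab \<in> {ab \<in> A \<times> B. fst ab \<otimes> snd ab = a0 \<otimes> b0}"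
      then obtain a b where ab: "ab = (a, b)" "a \<in> A" "b \<in> B" "a \<otimes> b = a0 \<otimes> b0" by auto
      have ac: "a \<in> carrier G" and bc: "b \<in> carrier G" using ab Ac Bc by auto
      have "inv a \<otimes> (a0 \<otimes> b0) = b" using ab(4) ac bc by (metis inv_m_cancel_left)
      then show "(a0 \<otimes> (inv a0 \<otimes> fst ab), inv (inv a0 \<otimes> fst ab) \<otimes> b0) = ab"
        using a0c b0c ac ab(1) by (simp add: group_cancel_simps)
    qed
    show "(\<lambda>c. (a0 \<otimes> c, inv c \<otimes> b0)) ` (A \<inter> B) \<subseteq> {ab \<in> A \<times> B. fst ab \<otimes> snd ab = a0 \<otimes> b0}"
      using subgroup.m_closed[OF A a0] subgroup.m_closed[OF B subgroup.m_inv_closed[OF B] b0]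
        a0c b0c Ac by (auto simp: group_cancel_simps)
    show "(\<lambda>ab. inv a0 \<otimes> fst ab) ` {ab \<in> A \<times> B. fst ab \<otimes> snd ab = a0 \<otimes> b0} \<subseteq> A \<inter> B"
    proof (rule image_subsetI)
      fix ab assume "ab \<in> {ab \<in> A \<times> B. fst ab \<otimes> snd ab = a0 \<otimes> b0}"
      then obtain a b where ab: "ab = (a, b)" "a \<in> A" "b \<in> B" "a \<otimes> b = a0 \<otimes> b0" by auto
      have ac: "a \<in> carrier G" and bc: "b \<in> carrier G" using ab Ac Bc by auto
      have "inv a0 \<otimes> a = b0 \<otimes> inv b"
        using arg_cong[OF ab(4), of "\<lambda>x. inv a0 \<otimes> x \<otimes> inv b"] a0c b0c ac bc
        by (simp add: group_cancel_simps)
      then show "inv a0 \<otimes> fst ab \<in> A \<inter> B"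
        using subgroup.m_closed[OF A subgroup.m_inv_closed[OF A a0] ab(2)]
          subgroup.m_closed[OF B b0 subgroup.m_inv_closed[OF B ab(3)]] ab(1) by simp
    qed
  qed
  then show ?thesis by (simp add: bij_betw_same_card)
qed

lemma card_set_mult_Int:
  assumes fin: "finite (carrier G)" and A: "subgroup A G" and B: "subgroup B G"
  shows "card (A <#> B) * card (A \<inter> B) = card A * card B"
proof -
  define F where "F x = {ab \<in> A \<times> B. fst ab \<otimes> snd ab = x}" for x
  have Ac: "A \<subseteq> carrier G" and Bc: "B \<subseteq> carrier G" using A B subgroup.subset by auto
  have finA: "finite A" and finB: "finite B" using Ac Bc fin finite_subset by auto
  have finAB: "finite (A <#> B)" using setmult_subset_G[OF Ac Bc] fin finite_subset by blast
  have "card A * card B = card (A \<times> B)" by (simp add: card_cartesian_product)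
  also have "A \<times> B = (\<Union>x\<in>A <#> B. F x)" by (force simp: F_def set_mult_iff)
  also have "card \<dots> = (\<Sum>x\<in>A <#> B. card (F x))"
    by (rule card_UN_disjoint[OF finAB]) (use finA finB in \<open>auto simp: F_def\<close>)
  also have "\<dots> = (\<Sum>x\<in>A <#> B. card (A \<inter> B))"
    by (rule sum.cong) (auto simp: F_def set_mult_iff card_mult_fibre[OF A B])
  finally show ?thesis by simp
qed

end

definition dvd_mult_closed :: "(nat \<Rightarrow> bool) \<Rightarrow> bool" where
  "dvd_mult_closed Q \<longleftrightarrow> Q 1 \<and> (\<forall>n d. Q n \<and> d dvd n \<longrightarrow> Q d) \<and> (\<forall>a b. Q a \<and> Q b \<longrightarrow> Q (a * b))"

lemma dvd_mult_closed_prime_power: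
  assumes p: "Factorial_Ring.prime (p::nat)"
  shows "dvd_mult_closed (\<lambda>n. \<exists>k. n = p ^ k)"
  unfolding dvd_mult_closed_def
proof (intro conjI allI impI)
  show "\<exists>k. 1 = p ^ k" by (rule exI[of _ 0]) simp
  fix n d assume "(\<exists>k. n = p ^ k) \<and> d dvd n"
  then show "\<exists>k. d = p ^ k" using divides_primepow_nat[OF p] by blast
next
  fix a b assume "(\<exists>k. a = p ^ k) \<and> (\<exists>k. b = p ^ k)"
  then show "\<exists>k. a * b = p ^ k" by (metis power_add)
qed

lemma dvd_mult_closed_coprime: "dvd_mult_closed (\<lambda>n. coprime n (p::nat))"
  unfolding dvd_mult_closed_def by (auto intro: coprime_imp_coprime dvd_trans)

definition Q_normal_over :: "('a, 'b) monoid_scheme \<Rightarrow> (nat \<Rightarrow> bool) \<Rightarrow> 'a set \<Rightarrow> 'a set \<Rightarrow> 'a set \<Rightarrow> bool" where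
  "Q_normal_over G Q K Y W \<longleftrightarrow> W \<lhd> G\<lparr>carrier := Y\<rparr> \<and> K \<subseteq> W \<and> Q (card W div card K)"

text \<open>The \<open>Q\<close>-radical of \<open>Y\<close> over \<open>K\<close> is chosen of maximal order; for \<open>dvd_mult_closed Q\<close>
  it then contains every other such subgroup, since their product is again one.\<close>

definition Q_radical :: "('a, 'b) monoid_scheme \<Rightarrow> (nat \<Rightarrow> bool) \<Rightarrow> 'a set \<Rightarrow> 'a set \<Rightarrow> 'a set" where
  "Q_radical G Q K Y =
     (SOME W. Q_normal_over G Q K Y W \<and> (\<forall>W'. Q_normal_over G Q K Y W' \<longrightarrow> card W' \<le> card W))"

definition subnormal_series :: "('a, 'b) monoid_scheme \<Rightarrow> 'a set list \<Rightarrow> bool" where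
  "subnormal_series G Gs \<longleftrightarrow> Gs \<noteq> [] \<and> hd Gs = {\<one>\<^bsub>G\<^esub>} \<and> last Gs = carrier G \<and>
     (\<forall>i < length Gs. subgroup (Gs ! i) G) \<and>
     (\<forall>i. Suc i < length Gs \<longrightarrow> Gs ! i \<lhd> G\<lparr>carrier := Gs ! Suc i\<rparr>)"

lemma p_solvable_iff_subnormal_series:
  "p_solvable p G \<longleftrightarrow> (\<exists>Gs. subnormal_series G Gs \<and>
     (\<forall>i. Suc i < length Gs \<longrightarrow>
        (\<exists>k. factor_order (Gs ! Suc i) (Gs ! i) = p ^ k) \<or>
        coprime (factor_order (Gs ! Suc i) (Gs ! i)) p))"
  unfolding p_solvable_def subnormal_series_def by blast

context group begin

lemma Q_normal_over_base:
  assumes fin: "finite (carrier G)" and K: "K \<lhd> G" and Y: "subgroup Y G" and KY: "K \<subseteq> Y"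
    and Q: "dvd_mult_closed Q"
  shows "Q_normal_over G Q K Y K"
proof -
  have "K \<lhd> G\<lparr>carrier := Y\<rparr>"
    using normal_in_subgroup_iff[OF Y] normal_imp_subgroup[OF K] KY normal_conj_closed[OF K]
      subgroup.mem_carrier[OF Y] by blast
  moreover have "card K > 0" by (rule card_subgroup_gt_0[OF fin normal_imp_subgroup[OF K]])
  ultimately show ?thesis using Q unfolding Q_normal_over_def dvd_mult_closed_def by simp
qed

lemma Q_normal_over_subgroup:
  "Q_normal_over G Q K Y W \<Longrightarrow> subgroup Y G \<Longrightarrow> subgroup W G \<and> W \<subseteq> Y"
  unfolding Q_normal_over_def using normal_in_subgroup_iff by blast

lemma Q_normal_over_set_mult:
  assumes fin: "finite (carrier G)" and K: "K \<lhd> G" and Y: "subgroup Y G"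
    and Q: "dvd_mult_closed Q" and W1: "Q_normal_over G Q K Y W1" and W2: "Q_normal_over G Q K Y W2"
  shows "Q_normal_over G Q K Y (W1 <#> W2)"
proof -
  interpret GY: group "G\<lparr>carrier := Y\<rparr>" by (rule subgroup_imp_group[OF Y])
  have n1: "W1 \<lhd> G\<lparr>carrier := Y\<rparr>" and n2: "W2 \<lhd> G\<lparr>carrier := Y\<rparr>"
    and k1: "K \<subseteq> W1" and k2: "K \<subseteq> W2"
    and q1: "Q (card W1 div card K)" and q2: "Q (card W2 div card K)"
    using W1 W2 unfolding Q_normal_over_def by auto
  have n12: "W1 <#> W2 \<lhd> G\<lparr>carrier := Y\<rparr>"
    using GY.normal_subgroup_set_mult_closed[OF n1 n2] by simp
  have s1: "subgroup W1 G" and s2: "subgroup W2 G" and s12: "subgroup (W1 <#> W2) G"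
    using n1 n2 n12 normal_in_subgroup_iff[OF Y] by auto
  have sK: "subgroup K G" by (rule normal_imp_subgroup[OF K])
  have sI: "subgroup (W1 \<inter> W2) G" by (rule subgroups_Inter_pair[OF s1 s2])
  have kp: "K \<subseteq> W1 <#> W2"
    using k1 subset_set_mult_subgroup_right[OF s2 subgroup.subset[OF s1]] by blast
  obtain r1 where r1: "card W1 = card K * r1" using card_subgroup_dvd[OF fin sK s1 k1] by (auto elim: dvdE)
  obtain r2 where r2: "card W2 = card K * r2" using card_subgroup_dvd[OF fin sK s2 k2] by (auto elim: dvdE)
  have kI: "K \<subseteq> W1 \<inter> W2" using k1 k2 by auto
  obtain r3 where r3: "card (W1 \<inter> W2) = card K * r3" using card_subgroup_dvd[OF fin sK sI kI] by (auto elim: dvdE)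
  obtain r where r: "card (W1 <#> W2) = card K * r" using card_subgroup_dvd[OF fin sK s12 kp] by (auto elim: dvdE)
  have c0: "card K > 0" by (rule card_subgroup_gt_0[OF fin sK])
  have "card (W1 <#> W2) * card (W1 \<inter> W2) = card W1 * card W2" by (rule card_set_mult_Int[OF fin s1 s2])
  then have "(card K * card K) * (r * r3) = (card K * card K) * (r1 * r2)"
    unfolding r r1 r2 r3 by (simp add: ac_simps)
  then have "r * r3 = r1 * r2" using c0 by simp
  then have "r dvd r1 * r2" by (metis dvd_triv_left)
  moreover have "Q r1" "Q r2" using q1 q2 r1 r2 c0 by auto
  ultimately have "Q r" using Q unfolding dvd_mult_closed_def by blast
  then have "Q (card (W1 <#> W2) div card K)" using r c0 by simp
  then show ?thesis using n12 kp unfolding Q_normal_over_def by simp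
qed

lemma Q_radical_maximal:
  assumes fin: "finite (carrier G)" and K: "K \<lhd> G" and Y: "subgroup Y G" and KY: "K \<subseteq> Y"
    and Q: "dvd_mult_closed Q"
  shows "Q_normal_over G Q K Y (Q_radical G Q K Y)"
    and "Q_normal_over G Q K Y W \<Longrightarrow> card W \<le> card (Q_radical G Q K Y)"
proof -
  have "\<exists>W. Q_normal_over G Q K Y W \<and> (\<forall>W'. Q_normal_over G Q K Y W' \<longrightarrow> card W' \<le> card W)"
  proof (rule ex_has_greatest_nat[where f = card and b = "Suc (card (carrier G))"])
    show "Q_normal_over G Q K Y K" by (rule Q_normal_over_base[OF assms])
    show "\<forall>W'. Q_normal_over G Q K Y W' \<longrightarrow> card W' < Suc (card (carrier G))"
      using Q_normal_over_subgroup[OF _ Y] subgroup.subset card_mono[OF fin] by (meson order_trans le_imp_less_Suc)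
  qed
  then have "Q_normal_over G Q K Y (Q_radical G Q K Y) \<and>
      (\<forall>W'. Q_normal_over G Q K Y W' \<longrightarrow> card W' \<le> card (Q_radical G Q K Y))"
    unfolding Q_radical_def by (rule someI_ex)
  then show "Q_normal_over G Q K Y (Q_radical G Q K Y)"
    and "Q_normal_over G Q K Y W \<Longrightarrow> card W \<le> card (Q_radical G Q K Y)" by auto
qed

lemma Q_radical_greatest:
  assumes fin: "finite (carrier G)" and K: "K \<lhd> G" and Y: "subgroup Y G" and KY: "K \<subseteq> Y"
    and Q: "dvd_mult_closed Q" and W: "Q_normal_over G Q K Y W"
  shows "W \<subseteq> Q_radical G Q K Y"
proof -
  let ?O = "Q_radical G Q K Y"
  have O: "Q_normal_over G Q K Y ?O" by (rule Q_radical_maximal(1)[OF assms(1-5)])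
  have gW: "Q_normal_over G Q K Y (W <#> ?O)" by (rule Q_normal_over_set_mult[OF fin K Y Q W O])
  have sW: "subgroup W G" and sO: "subgroup ?O G" and sWO: "subgroup (W <#> ?O) G"
    using Q_normal_over_subgroup[OF W Y] Q_normal_over_subgroup[OF O Y] Q_normal_over_subgroup[OF gW Y]
    by auto
  have "finite (W <#> ?O)" using subgroup.subset[OF sWO] fin finite_subset by blast
  moreover have "?O \<subseteq> W <#> ?O" by (rule subset_set_mult_subgroup_left[OF sW subgroup.subset[OF sO]])
  moreover have "card (W <#> ?O) \<le> card ?O" by (rule Q_radical_maximal(2)[OF assms(1-5) gW])
  ultimately have "?O = W <#> ?O" using card_seteq by blast
  then show ?thesis using subset_set_mult_subgroup_right[OF sO subgroup.subset[OF sW]] by simp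
qed

lemma Q_normal_over_conj_image:
  assumes K: "K \<lhd> G" and Y: "subgroup Y G" and Z: "subgroup Z G" and YZ: "Y \<lhd> G\<lparr>carrier := Z\<rparr>"
    and W: "Q_normal_over G Q K Y W" and z: "z \<in> Z"
  shows "Q_normal_over G Q K Y ((\<lambda>w. z \<otimes> w \<otimes> inv z) ` W)"
proof -
  let ?V = "(\<lambda>w. z \<otimes> w \<otimes> inv z) ` W"
  have sW: "subgroup W G" and WY: "W \<subseteq> Y" using Q_normal_over_subgroup[OF W Y] by auto
  have nW: "W \<lhd> G\<lparr>carrier := Y\<rparr>" and KW: "K \<subseteq> W" and qW: "Q (card W div card K)"
    using W unfolding Q_normal_over_def by auto
  have Wc: "\<And>y w. y \<in> Y \<Longrightarrow> w \<in> W \<Longrightarrow> y \<otimes> w \<otimes> inv y \<in> W"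
    using nW normal_in_subgroup_iff[OF Y] by blast
  have Yc: "\<And>z y. z \<in> Z \<Longrightarrow> y \<in> Y \<Longrightarrow> z \<otimes> y \<otimes> inv z \<in> Y"
    using YZ normal_in_subgroup_iff[OF Z] by auto
  have zc: "z \<in> carrier G" by (rule subgroup.mem_carrier[OF Z z])
  have sV: "subgroup ?V G" by (rule subgroup_conj_image[OF sW zc])
  have VY: "?V \<subseteq> Y" using Yc[OF z] WY by auto
  have Vc: "y \<otimes> v \<otimes> inv y \<in> ?V" if y: "y \<in> Y" and v: "v \<in> ?V" for y v
  proof -
    obtain u where u: "u \<in> W" "v = z \<otimes> u \<otimes> inv z" using v by blast
    have yc: "y \<in> carrier G" and uc: "u \<in> carrier G"
      using subgroup.mem_carrier[OF Y y] subgroup.mem_carrier[OF sW u(1)] .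
    have "inv z \<otimes> y \<otimes> z \<in> Y" using Yc[OF subgroup.m_inv_closed[OF Z z] y] zc by simp
    then have u': "(inv z \<otimes> y \<otimes> z) \<otimes> u \<otimes> inv (inv z \<otimes> y \<otimes> z) \<in> W" by (rule Wc[OF _ u(1)])
    have "y \<otimes> v \<otimes> inv y = z \<otimes> ((inv z \<otimes> y \<otimes> z) \<otimes> u \<otimes> inv (inv z \<otimes> y \<otimes> z)) \<otimes> inv z"
      using u(2) yc uc zc by (simp add: group_cancel_simps)
    then show ?thesis using u' by blast
  qed
  have KV: "K \<subseteq> ?V"
  proof
    fix k assume k: "k \<in> K"
    have "inv z \<otimes> k \<otimes> z \<in> W" using KW normal_conj_closed'[OF K zc k] by blast
    moreover have "k = z \<otimes> (inv z \<otimes> k \<otimes> z) \<otimes> inv z"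
      using normal_mem_carrier[OF K k] zc by (simp add: group_cancel_simps)
    ultimately show "k \<in> ?V" by blast
  qed
  have "?V \<lhd> G\<lparr>carrier := Y\<rparr>" using normal_in_subgroup_iff[OF Y] sV VY Vc by blast
  moreover have "card ?V = card W" by (rule card_conj_image[OF subgroup.subset[OF sW] zc])
  ultimately show ?thesis unfolding Q_normal_over_def using KV qW by simp
qed

text \<open>Being unique, the \<open>Q\<close>-radical is invariant under conjugation, hence it stays normal
  when passing to a larger subgroup.\<close>

lemma Q_radical_mono:
  assumes fin: "finite (carrier G)" and K: "K \<lhd> G" and Y: "subgroup Y G" and KY: "K \<subseteq> Y"
    and Q: "dvd_mult_closed Q" and Z: "subgroup Z G" and YZ: "Y \<lhd> G\<lparr>carrier := Z\<rparr>"
  shows "Q_radical G Q K Y \<subseteq> Q_radical G Q K Z"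
proof -
  let ?W = "Q_radical G Q K Y"
  have gW: "Q_normal_over G Q K Y ?W" by (rule Q_radical_maximal(1)[OF fin K Y KY Q])
  have sW: "subgroup ?W G" and WY: "?W \<subseteq> Y" using Q_normal_over_subgroup[OF gW Y] by auto
  have YZs: "Y \<subseteq> Z" using YZ normal_in_subgroup_iff[OF Z] by auto
  have "z \<otimes> w \<otimes> inv z \<in> ?W" if "z \<in> Z" "w \<in> ?W" for z w
    using Q_radical_greatest[OF fin K Y KY Q Q_normal_over_conj_image[OF K Y Z YZ gW \<open>z \<in> Z\<close>]]
      \<open>w \<in> ?W\<close> by blast
  then have "?W \<lhd> G\<lparr>carrier := Z\<rparr>" using normal_in_subgroup_iff[OF Z] sW WY YZs by blast
  then have "Q_normal_over G Q K Z ?W" using gW unfolding Q_normal_over_def by simp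
  moreover have "K \<subseteq> Z" using KY YZs by blast
  ultimately show ?thesis using Q_radical_greatest[OF fin K Z _ Q] by blast
qed

lemma Q_radical_series_mono:
  assumes fin: "finite (carrier G)" and K: "K \<lhd> G" and Q: "dvd_mult_closed Q"
    and ser: "subnormal_series G Gs" and il: "i \<le> l" and l: "l < length Gs"
  shows "Q_radical G Q K (Gs ! i <#> K) \<subseteq> Q_radical G Q K (Gs ! l <#> K)"
  using il l
proof (induction l rule: dec_induct)
  case (step m)
  have sm: "subgroup (Gs ! m) G" and sm1: "subgroup (Gs ! Suc m) G"
    and nm: "Gs ! m \<lhd> G\<lparr>carrier := Gs ! Suc m\<rparr>"
    using ser step.prems unfolding subnormal_series_def by auto
  have sK: "subgroup K G" by (rule normal_imp_subgroup[OF K])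
  have "Q_radical G Q K (Gs ! m <#> K) \<subseteq> Q_radical G Q K (Gs ! Suc m <#> K)"
    by (rule Q_radical_mono[OF fin K subgroup_set_mult_normal[OF K sm]
          subset_set_mult_subgroup_left[OF sm subgroup.subset[OF sK]] Q
          subgroup_set_mult_normal[OF K sm1] normal_set_mult_normal[OF K sm1 nm]])
  then show ?case using step by simp
qed simp

lemma factor_order_dvd:
  assumes fin: "finite (carrier G)" and sK: "subgroup K G" and sH: "subgroup H G" and sL: "subgroup L G"
    and KH: "K \<subseteq> H" and HL: "H \<subseteq> L"
  shows "factor_order H K dvd factor_order L K"
proof -
  obtain a where a: "card H = card K * a" using card_subgroup_dvd[OF fin sK sH KH] by (auto elim!: dvdE)
  obtain b where b: "card L = card H * b" using card_subgroup_dvd[OF fin sH sL HL] by (auto elim!: dvdE)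
  have "card K > 0" by (rule card_subgroup_gt_0[OF fin sK])
  then show ?thesis unfolding factor_order_def using a b by (simp add: mult.assoc)
qed

text \<open>\<open>|(S \<inter> H) K : K| = |S \<inter> H : S \<inter> K|\<close> divides \<open>|S \<inter> H : R \<inter> H| = |(S \<inter> H) R : R|\<close>,
  which divides \<open>|S : R|\<close>.\<close>

lemma factor_order_Int_set_mult_dvd:
  assumes fin: "finite (carrier G)" and sS: "subgroup S G" and RS: "R \<lhd> G\<lparr>carrier := S\<rparr>"
    and sH: "subgroup H G" and sK: "subgroup K G" and KH: "K \<subseteq> H" and RHK: "R \<inter> H \<subseteq> K"
  shows "factor_order ((S \<inter> H) <#> K) K dvd factor_order S R"
proof -
  have sR: "subgroup R G" and RSs: "R \<subseteq> S" using RS normal_in_subgroup_iff[OF sS] by auto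
  have sSH: "subgroup (S \<inter> H) G" by (rule subgroups_Inter_pair[OF sS sH])
  have sSK: "subgroup (S \<inter> K) G" by (rule subgroups_Inter_pair[OF sS sK])
  have sRH: "subgroup (R \<inter> H) G" by (rule subgroups_Inter_pair[OF sR sH])
  interpret GS: group "G\<lparr>carrier := S\<rparr>" by (rule subgroup_imp_group[OF sS])
  have "subgroup (S \<inter> H) (G\<lparr>carrier := S\<rparr>)" by (rule subgroup_incl[OF sSH sS]) auto
  then have "subgroup ((S \<inter> H) <#>\<^bsub>G\<lparr>carrier := S\<rparr>\<^esub> R) (G\<lparr>carrier := S\<rparr>)"
    by (rule GS.subgroup_set_mult_normal[OF RS])
  then have sM: "subgroup ((S \<inter> H) <#> R) G" and MS: "(S \<inter> H) <#> R \<subseteq> S"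
    using incl_subgroup[OF sS] subgroup.subset by fastforce+
  have c1: "card ((S \<inter> H) <#> K) * card (S \<inter> K) = card (S \<inter> H) * card K"
  proof -
    have "S \<inter> H \<inter> K = S \<inter> K" using KH by blast
    then show ?thesis using card_set_mult_Int[OF fin sSH sK] by simp
  qed
  have c2: "card ((S \<inter> H) <#> R) * card (R \<inter> H) = card (S \<inter> H) * card R"
  proof -
    have "S \<inter> H \<inter> R = R \<inter> H" using RSs by blast
    then show ?thesis using card_set_mult_Int[OF fin sSH sR] by simp
  qed
  obtain t where t: "card (S \<inter> H) = card (S \<inter> K) * t"
    using card_subgroup_dvd[OF fin sSK sSH] KH by (auto elim!: dvdE)
  obtain u where u: "card (S \<inter> K) = card (R \<inter> H) * u"
    using card_subgroup_dvd[OF fin sRH sSK] RHK RSs by (auto elim!: dvdE)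
  obtain v where v: "card ((S \<inter> H) <#> R) = card R * v"
    using card_subgroup_dvd[OF fin sR sM subset_set_mult_subgroup_left[OF sSH subgroup.subset[OF sR]]]
    by (auto elim!: dvdE)
  obtain w where w: "card S = card ((S \<inter> H) <#> R) * w"
    using card_subgroup_dvd[OF fin sM sS MS] by (auto elim!: dvdE)
  have pR: "card R > 0" and pRH: "card (R \<inter> H) > 0" and pSK: "card (S \<inter> K) > 0" and pK: "card K > 0"
    using card_subgroup_gt_0[OF fin] sR sRH sSK sK by auto
  have "card R * v * card (R \<inter> H) = card (R \<inter> H) * u * t * card R"
    using c2 t u v by (simp add: ac_simps)
  then have "v = u * t" using pR pRH by (simp add: ac_simps)
  then have "factor_order S R = t * (u * w)" unfolding factor_order_def using w v pR by simp
  moreover have "card ((S \<inter> H) <#> K) = t * card K"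
    using c1 t pSK by (simp add: ac_simps)
  ultimately show ?thesis unfolding factor_order_def using pK by simp
qed

text \<open>The first term \<open>S\<close> of the series meeting \<open>H\<close> outside \<open>K\<close> provides the subgroup
  \<open>(S \<inter> H) K\<close>, which lies in the \<open>Q\<close>-radical of \<open>G\<close> over \<open>K\<close>; that radical therefore
  cuts \<open>H\<close> above \<open>K\<close>, and by minimality of \<open>H/K\<close> it contains \<open>H\<close>.\<close>

lemma chief_factor_order_Q:
  assumes fin: "finite (carrier G)" and ser: "subnormal_series G Gs"
    and ch: "chief_factor G H K" and Q: "dvd_mult_closed Q"
    and j: "Suc i < length Gs" and below: "Gs ! i \<inter> H \<subseteq> K" and above: "\<not> Gs ! Suc i \<inter> H \<subseteq> K"
    and qf: "Q (factor_order (Gs ! Suc i) (Gs ! i))"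
  shows "Q (factor_order H K)"
proof -
  define S where "S = Gs ! Suc i"
  define M where "M = (S \<inter> H) <#> K"
  let ?O = "Q_radical G Q K (carrier G)"
  have K: "K \<lhd> G" and H: "H \<lhd> G" and KH: "K \<subset> H"
    and nomid: "\<And>N. N \<lhd> G \<Longrightarrow> K \<subset> N \<Longrightarrow> N \<subset> H \<Longrightarrow> False"
    using ch unfolding chief_factor_def by blast+
  have sK: "subgroup K G" and sH: "subgroup H G" using K H normal_imp_subgroup by auto
  have sS: "subgroup S G" and RS: "Gs ! i \<lhd> G\<lparr>carrier := S\<rparr>"
    using ser j unfolding subnormal_series_def S_def by auto
  have sSH: "subgroup (S \<inter> H) G" by (rule subgroups_Inter_pair[OF sS sH])
  have KM: "K \<subseteq> M" unfolding M_def by (rule subset_set_mult_subgroup_left[OF sSH subgroup.subset[OF sK]])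
  have "Q (factor_order M K)"
    using Q factor_order_Int_set_mult_dvd[OF fin sS RS sH sK _ below] KH qf
    unfolding M_def S_def dvd_mult_closed_def by blast
  moreover have "M \<lhd> G\<lparr>carrier := S <#> K\<rparr>"
    unfolding M_def by (rule normal_set_mult_normal[OF K sS]) (use normal_Int_subgroup[OF sS H] in \<open>simp add: Int_commute\<close>)
  ultimately have "Q_normal_over G Q K (S <#> K) M"
    unfolding Q_normal_over_def factor_order_def using KM by simp
  then have "M \<subseteq> Q_radical G Q K (S <#> K)"
    by (rule Q_radical_greatest[OF fin K subgroup_set_mult_normal[OF K sS]
          subset_set_mult_subgroup_left[OF sS subgroup.subset[OF sK]] Q])
  also have "\<dots> \<subseteq> Q_radical G Q K (Gs ! (length Gs - 1) <#> K)"
    unfolding S_def by (rule Q_radical_series_mono[OF fin K Q ser]) (use j in auto)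
  also have "\<dots> = ?O"
    using ser carrier_set_mult_normal[OF K] unfolding subnormal_series_def by (metis last_conv_nth)
  finally have MO: "M \<subseteq> ?O" .
  have gO: "Q_normal_over G Q K (carrier G) ?O"
    by (rule Q_radical_maximal(1)[OF fin K subgroup_self subgroup.subset[OF sK] Q])
  have nO: "?O \<lhd> G" and KO: "K \<subseteq> ?O" and QO: "Q (card ?O div card K)"
    using gO normal_in_carrier_iff unfolding Q_normal_over_def by auto
  have "S \<inter> H \<subseteq> M" unfolding M_def by (rule subset_set_mult_subgroup_right[OF sK subgroup.subset[OF sSH]])
  then have "K \<subset> ?O \<inter> H" using above MO KO KH unfolding S_def by blast
  then have HO: "H \<subseteq> ?O" using nomid[OF normal_subgroup_intersect[OF nO H]] by blast
  have "factor_order H K dvd factor_order ?O K"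
    by (rule factor_order_dvd[OF fin sK sH normal_imp_subgroup[OF nO]]) (use KH HO in auto)
  then show ?thesis using QO Q unfolding dvd_mult_closed_def factor_order_def by blast
qed

end

lemma list_exists_first_change:
  assumes "xs \<noteq> []" "P (xs ! 0)" "\<not> P (xs ! (length xs - 1))"
  shows "\<exists>i. Suc i < length xs \<and> P (xs ! i) \<and> \<not> P (xs ! Suc i)"
proof -
  define j where "j = (LEAST j. j < length xs \<and> \<not> P (xs ! j))"
  have "length xs - 1 < length xs \<and> \<not> P (xs ! (length xs - 1))" using assms by simp
  then have j: "j < length xs \<and> \<not> P (xs ! j)" unfolding j_def by (rule LeastI)
  then have "j \<noteq> 0" using assms(2) by (metis gr0I)
  then obtain i where i: "j = Suc i" using not0_implies_Suc by blast
  have "\<not> (i < length xs \<and> \<not> P (xs ! i))"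
    using not_less_Least[of i "\<lambda>j. j < length xs \<and> \<not> P (xs ! j)"] i unfolding j_def by simp
  then have "P (xs ! i)" using i j by simp
  then show ?thesis using i j by blast
qed

lemma (in group) chief_factor_prime_power:
  assumes fin: "finite (carrier G)" and p: "Factorial_Ring.prime p" and ps: "p_solvable p G"
    and ch: "chief_factor G H K" and dv: "p dvd factor_order H K"
  shows "\<exists>k. factor_order H K = p ^ k"
proof -
  obtain Gs where ser: "subnormal_series G Gs"
    and fac: "\<And>i. Suc i < length Gs \<Longrightarrow> (\<exists>k. factor_order (Gs ! Suc i) (Gs ! i) = p ^ k) \<or>
           coprime (factor_order (Gs ! Suc i) (Gs ! i)) p"
    using ps unfolding p_solvable_iff_subnormal_series by blast
  have K: "K \<lhd> G" and H: "H \<lhd> G" and KH: "K \<subset> H" using ch unfolding chief_factor_def by blast+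
  have "Gs \<noteq> []" "Gs ! 0 = {\<one>}" "Gs ! (length Gs - 1) = carrier G"
    using ser unfolding subnormal_series_def by (auto simp: hd_conv_nth last_conv_nth)
  moreover have "{\<one>} \<inter> H \<subseteq> K" using subgroup.one_closed[OF normal_imp_subgroup[OF K]] by blast
  moreover have "\<not> carrier G \<inter> H \<subseteq> K" using normal_imp_subgroup[OF H, THEN subgroup.subset] KH by blast
  ultimately obtain i where i: "Suc i < length Gs" and below: "Gs ! i \<inter> H \<subseteq> K"
    and above: "\<not> Gs ! Suc i \<inter> H \<subseteq> K"
    using list_exists_first_change[of Gs "\<lambda>S. S \<inter> H \<subseteq> K"] by auto
  from fac[OF i] show ?thesis
  proof
    assume "\<exists>k. factor_order (Gs ! Suc i) (Gs ! i) = p ^ k"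
    then show ?thesis
      by (rule chief_factor_order_Q[OF fin ser ch dvd_mult_closed_prime_power[OF p] i below above])
  next
    assume "coprime (factor_order (Gs ! Suc i) (Gs ! i)) p"
    then have "coprime (factor_order H K) p"
      by (rule chief_factor_order_Q[OF fin ser ch dvd_mult_closed_coprime i below above])
    then show ?thesis using dv p by (meson coprime_common_divisor dvd_refl not_prime_unit)
  qed
qed

lemma (in group_action) p_group_fixed_point:
  assumes finE: "finite E" and cG: "card (carrier G) = p ^ a"
    and p: "Factorial_Ring.prime p" and nd: "\<not> p dvd card E"
  shows "\<exists>x\<in>E. \<forall>g\<in>carrier G. \<phi> g x = x"
proof (rule ccontr)
  assume nfix: "\<not> (\<exists>x\<in>E. \<forall>g\<in>carrier G. \<phi> g x = x)"
  have orbdvd: "p dvd card orb" if orb: "orb \<in> orbits G E \<phi>" for orb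
  proof -
    obtain x where x: "x \<in> E" and ox: "orb = orbit G \<phi> x" using orb unfolding orbits_def by blast
    have "card (orbit G \<phi> x) * card (stabilizer G \<phi> x) = p ^ a"
      using orbit_stabilizer_theorem[OF x] cG unfolding order_def by simp
    then have "card (orbit G \<phi> x) dvd p ^ a" by (metis dvd_triv_left)
    then obtain i where i: "card (orbit G \<phi> x) = p ^ i" using divides_primepow_nat[OF p] by blast
    show ?thesis
    proof (cases i)
      case 0
      then have c1: "card (orbit G \<phi> x) = 1" using i by simp
      have xo: "x \<in> orbit G \<phi> x" by (rule orbit_refl[OF x])
      have "orbit G \<phi> x = {x}" using c1 xo by (metis card_1_singletonE singletonD)
      then have "\<forall>g\<in>carrier G. \<phi> g x = x" unfolding orbit_def by blast
      then show ?thesis using nfix x by blast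
    next
      case (Suc k)
      then show ?thesis using i ox by simp
    qed
  qed
  have "(\<Sum>orb\<in>orbits G E \<phi>. \<Sum>x\<in>orb. (1::nat)) = (\<Sum>x\<in>E. 1)" by (rule disjoint_sum[OF finE])
  then have "(\<Sum>orb\<in>orbits G E \<phi>. card orb) = card E" by simp
  moreover have "p dvd (\<Sum>orb\<in>orbits G E \<phi>. card orb)" using orbdvd by (simp add: dvd_sum)
  ultimately show False using nd by simp
qed

context group begin

lemma r_coset_fixed_conj_mem:
  assumes sP: "subgroup P G" and x: "x \<in> carrier G" and t: "t \<in> carrier G"
    and eq: "P #> x #> t = P #> x"
  shows "x \<otimes> t \<otimes> inv x \<in> P"
proof -
  have Pc: "P \<subseteq> carrier G" by (rule subgroup.subset[OF sP])
  have "x \<otimes> t \<in> P #> (x \<otimes> t)" by (rule rcos_self[OF _ sP]) (use x t in simp)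
  then have "x \<otimes> t \<in> P #> x" using eq coset_mult_assoc[OF Pc x t] by simp
  then obtain h where h: "h \<in> P" "x \<otimes> t = h \<otimes> x" unfolding r_coset_def by blast
  have "x \<otimes> t \<otimes> inv x = h" using h subgroup.mem_carrier[OF sP] x t by (simp add: group_cancel_simps)
  then show ?thesis using h by simp
qed

lemma rcosets_subgroup_mem:
  assumes sC: "subgroup C G" and Pc: "P \<subseteq> carrier G"
    and S: "S \<in> rcosets\<^bsub>G\<lparr>carrier := C\<rparr>\<^esub> P" and c: "c \<in> C"
  shows "S \<subseteq> carrier G" and "S #> c \<in> rcosets\<^bsub>G\<lparr>carrier := C\<rparr>\<^esub> P"
proof -
  obtain d where d: "d \<in> C" "S = P #> d" using S unfolding RCOSETS_def by auto
  have dc: "d \<in> carrier G" and cc: "c \<in> carrier G" using subgroup.mem_carrier[OF sC] d c by auto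
  show "S \<subseteq> carrier G" using r_coset_subset_G[OF Pc dc] d by simp
  have "S #> c = P #> (d \<otimes> c)" using coset_mult_assoc[OF Pc dc cc] d by simp
  then show "S #> c \<in> rcosets\<^bsub>G\<lparr>carrier := C\<rparr>\<^esub> P"
    using subgroup.m_closed[OF sC d(1) c] unfolding RCOSETS_def by auto
qed

lemma bij_betw_rcosets_r_coset:
  assumes sC: "subgroup C G" and Pc: "P \<subseteq> carrier G" and c: "c \<in> C"
  shows "bij_betw (\<lambda>S. S #> c) (rcosets\<^bsub>G\<lparr>carrier := C\<rparr>\<^esub> P) (rcosets\<^bsub>G\<lparr>carrier := C\<rparr>\<^esub> P)"
proof (rule bij_betw_byWitness[where f' = "\<lambda>S. S #> inv c"])
  let ?E = "rcosets\<^bsub>G\<lparr>carrier := C\<rparr>\<^esub> P"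
  have cc: "c \<in> carrier G" and ic: "inv c \<in> C"
    using subgroup.mem_carrier[OF sC c] subgroup.m_inv_closed[OF sC c] .
  have Sc: "S \<subseteq> carrier G" if "S \<in> ?E" for S by (rule rcosets_subgroup_mem(1)[OF sC Pc that c])
  show "\<forall>S\<in>?E. S #> c #> inv c = S" "\<forall>S\<in>?E. S #> inv c #> c = S"
    using coset_mult_assoc[OF Sc cc inv_closed[OF cc]] coset_mult_assoc[OF Sc inv_closed[OF cc] cc]
      coset_mult_one[OF Sc] cc by simp_all
  show "(\<lambda>S. S #> c) ` ?E \<subseteq> ?E" "(\<lambda>S. S #> inv c) ` ?E \<subseteq> ?E"
    using rcosets_subgroup_mem(2)[OF sC Pc] c ic by auto
qed

lemma rcosets_right_mult_action:
  assumes sC: "subgroup C G" and sP: "subgroup P G"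
    and sA: "subgroup A G" and AC: "A \<subseteq> C"
  shows "group_action (G\<lparr>carrier := A\<rparr>) (rcosets\<^bsub>G\<lparr>carrier := C\<rparr>\<^esub> P)
           (\<lambda>a. \<lambda>S\<in>rcosets\<^bsub>G\<lparr>carrier := C\<rparr>\<^esub> P. S #> inv a)"
proof -
  define E where "E = rcosets\<^bsub>G\<lparr>carrier := C\<rparr>\<^esub> P"
  define phi where "phi a = (\<lambda>S\<in>E. S #> inv a)" for a
  have Pc: "P \<subseteq> carrier G" by (rule subgroup.subset[OF sP])
  have ac: "a \<in> carrier G" and iaC: "inv a \<in> C" if "a \<in> A" for a
    using AC that subgroup.mem_carrier[OF sA] subgroup.m_inv_closed[OF sA] by blast+
  have phiB: "phi a \<in> Bij E" if "a \<in> A" for a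
  proof -
    have "bij_betw (phi a) E E"
      using bij_betw_rcosets_r_coset[OF sC Pc iaC[OF that]] unfolding phi_def E_def
      by (rule bij_betw_cong[THEN iffD1, rotated]) simp
    then show ?thesis unfolding Bij_def phi_def by simp
  qed
  interpret A: group "G\<lparr>carrier := A\<rparr>" by (rule subgroup_imp_group[OF sA])
  have "phi \<in> hom (G\<lparr>carrier := A\<rparr>) (BijGroup E)"
  proof (rule homI)
    fix a assume "a \<in> carrier (G\<lparr>carrier := A\<rparr>)"
    then show "phi a \<in> carrier (BijGroup E)" using phiB by (simp add: BijGroup_def)
  next
    fix a b assume "a \<in> carrier (G\<lparr>carrier := A\<rparr>)" "b \<in> carrier (G\<lparr>carrier := A\<rparr>)"
    then have ab: "a \<in> A" "b \<in> A" by auto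
    have "phi (a \<otimes> b) S = compose E (phi a) (phi b) S" for S
    proof (cases "S \<in> E")
      case True
      have "S #> inv (a \<otimes> b) = S #> inv b #> inv a"
        using coset_mult_assoc[OF rcosets_subgroup_mem(1)[OF sC Pc True[unfolded E_def] iaC[OF ab(2)]]]
          ac[OF ab(1)] ac[OF ab(2)] by (simp add: inv_mult_group)
      then show ?thesis
        using True rcosets_subgroup_mem(2)[OF sC Pc True[unfolded E_def] iaC[OF ab(2)]]
        unfolding phi_def compose_def E_def by simp
    qed (simp add: phi_def compose_def)
    then show "phi (a \<otimes>\<^bsub>G\<lparr>carrier := A\<rparr>\<^esub> b) = phi a \<otimes>\<^bsub>BijGroup E\<^esub> phi b"
      using phiB[OF ab(1)] phiB[OF ab(2)] by (simp add: BijGroup_def ext)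
  qed
  then show ?thesis
    unfolding group_action_def group_hom_def group_hom_axioms_def E_def[symmetric] phi_def[abs_def, symmetric]
    using A.is_group group_BijGroup by simp
qed

text \<open>A \<open>p\<close>-subgroup acting on the cosets of a subgroup of index prime to \<open>p\<close> fixes one of
  them; applied to the conjugate \<open>gPg\<^sup>-\<^sup>1 \<subseteq> C\<close> this is the conjugacy part of Sylow's theorem.\<close>

lemma conj_into_normalizer:
  assumes fin: "finite (carrier G)" and sC: "subgroup C G" and sP: "subgroup P G"
    and cP: "card P = p ^ e" and p: "Factorial_Ring.prime p"
    and nd: "\<not> p dvd card (rcosets\<^bsub>G\<lparr>carrier := C\<rparr>\<^esub> P)"
    and g: "g \<in> carrier G" and gC: "\<forall>y\<in>P. g \<otimes> y \<otimes> inv g \<in> C"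
  shows "\<exists>x\<in>C. x \<otimes> g \<in> normalizer G P"
proof -
  define A where "A = (\<lambda>y. g \<otimes> y \<otimes> inv g) ` P"
  have Pc: "P \<subseteq> carrier G" by (rule subgroup.subset[OF sP])
  have sA: "subgroup A G" unfolding A_def by (rule subgroup_conj_image[OF sP g])
  have AC: "A \<subseteq> C" unfolding A_def using gC by blast
  have cA: "card (carrier (G\<lparr>carrier := A\<rparr>)) = p ^ e" using card_conj_image[OF Pc g] cP A_def by simp
  have "rcosets\<^bsub>G\<lparr>carrier := C\<rparr>\<^esub> P \<subseteq> Pow (carrier G)"
    using r_coset_subset_G[OF Pc] subgroup.mem_carrier[OF sC] unfolding RCOSETS_def by auto
  then have "finite (rcosets\<^bsub>G\<lparr>carrier := C\<rparr>\<^esub> P)" by (rule finite_subset) (simp add: fin)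
  then obtain S where S: "S \<in> rcosets\<^bsub>G\<lparr>carrier := C\<rparr>\<^esub> P"
    and fixed: "\<forall>a\<in>A. S #> inv a = S"
    using group_action.p_group_fixed_point[OF rcosets_right_mult_action[OF sC sP sA AC] _ cA p nd]
    by auto
  obtain x where x: "x \<in> C" "S = P #> x" using S unfolding RCOSETS_def by auto
  have xc: "x \<in> carrier G" by (rule subgroup.mem_carrier[OF sC x(1)])
  have "(x \<otimes> g) \<otimes> y \<otimes> inv (x \<otimes> g) \<in> P" if y: "y \<in> P" for y
  proof -
    have yc: "y \<in> carrier G" using y Pc by auto
    have "g \<otimes> inv y \<otimes> inv g \<in> A" unfolding A_def using subgroup.m_inv_closed[OF sP y] by blast
    moreover have "inv (g \<otimes> inv y \<otimes> inv g) = g \<otimes> y \<otimes> inv g" using g yc by (simp add: group_cancel_simps)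
    ultimately have "P #> x #> (g \<otimes> y \<otimes> inv g) = P #> x" using fixed x(2) by metis
    then have "x \<otimes> (g \<otimes> y \<otimes> inv g) \<otimes> inv x \<in> P" using r_coset_fixed_conj_mem[OF sP xc] g yc by simp
    then show ?thesis using xc yc g by (simp add: group_cancel_simps)
  qed
  then show ?thesis using mem_normalizer_iff[OF fin Pc] xc g x(1) by auto
qed

lemma sylow_index_not_dvd:
  assumes fin: "finite (carrier G)" and p: "Factorial_Ring.prime p" and sP: "subgroup P G"
    and cP: "card P = p ^ multiplicity p (order G)" and sC: "subgroup C G" and PC: "P \<subseteq> C"
  shows "\<not> p dvd card (rcosets\<^bsub>G\<lparr>carrier := C\<rparr>\<^esub> P)"
proof
  let ?e = "multiplicity p (order G)"
  interpret GC: group "G\<lparr>carrier := C\<rparr>" by (rule subgroup_imp_group[OF sC])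
  have "subgroup P (G\<lparr>carrier := C\<rparr>)" by (rule subgroup_incl[OF sP sC PC])
  then have "card (rcosets\<^bsub>G\<lparr>carrier := C\<rparr>\<^esub> P) * card P = card C"
    using GC.lagrange unfolding order_def by simp
  moreover assume "p dvd card (rcosets\<^bsub>G\<lparr>carrier := C\<rparr>\<^esub> P)"
  ultimately have "p * p ^ ?e dvd card C" using cP by (metis mult_dvd_mono dvd_refl)
  moreover have "card C dvd order G"
    using card_subgroup_dvd[OF fin sC subgroup_self subgroup.subset[OF sC]] unfolding order_def .
  ultimately have "p ^ Suc ?e dvd order G" by (simp add: dvd_trans)
  moreover have "order G \<noteq> 0" using card_subgroup_gt_0[OF fin subgroup_self] unfolding order_def by simp
  ultimately have "Suc ?e \<le> ?e" using multiplicity_geI p by (metis not_prime_unit)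
  then show False by simp
qed

lemma frattini_argument:
  assumes fin: "finite (carrier G)" and p: "Factorial_Ring.prime p" and sP: "subgroup P G"
    and cP: "card P = p ^ multiplicity p (order G)"
    and C: "C \<lhd> G" and PC: "P \<subseteq> C" and g: "g \<in> carrier G"
  shows "\<exists>c\<in>C. \<exists>n\<in>normalizer G P. g = c \<otimes> n"
proof -
  have sC: "subgroup C G" using C normal_imp_subgroup by blast
  obtain x where x: "x \<in> C" and xg: "x \<otimes> g \<in> normalizer G P"
    using conj_into_normalizer[OF fin sC sP cP p sylow_index_not_dvd[OF fin p sP cP sC PC] g]
      normal_conj_closed[OF C g] PC by blast
  have xc: "x \<in> carrier G" by (rule subgroup.mem_carrier[OF sC x])
  have "g = inv x \<otimes> (x \<otimes> g)" using xc g by simp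
  then show ?thesis using xg subgroup.m_inv_closed[OF sC x] by blast
qed

end

lemma multiplicity_le_of_dvd:
  fixes p :: nat
  assumes p: "Factorial_Ring.prime p" and n: "n \<noteq> 0" and k: "k \<noteq> 0"
    and hn: "h dvd n" and eq: "h * p ^ c = p ^ multiplicity p n * k"
  shows "multiplicity p k \<le> c"
proof -
  have pe: "prime_elem p" using p by (rule prime_imp_prime_elem)
  have h: "h \<noteq> 0" and pp: "\<And>i. p ^ i \<noteq> 0" using hn n p by auto
  have "multiplicity p h + c = multiplicity p n + multiplicity p k"
    using arg_cong[OF eq, of "multiplicity p"] h k pp
    by (simp add: prime_elem_multiplicity_mult_distrib[OF pe] multiplicity_same_power p)
  moreover have "multiplicity p h \<le> multiplicity p n" by (rule dvd_imp_multiplicity_le[OF hn n])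
  ultimately show ?thesis by simp
qed

context group begin

lemma card_normal_Int_sylow:
  assumes fin: "finite (carrier G)" and p: "Factorial_Ring.prime p" and sP: "subgroup P G"
    and cP: "card P = p ^ multiplicity p (order G)" and H: "H \<lhd> G"
  shows "card (H \<inter> P) = p ^ multiplicity p (card H)"
proof -
  have sH: "subgroup H G" by (rule normal_imp_subgroup[OF H])
  have sHP: "subgroup (H \<inter> P) G" by (rule subgroups_Inter_pair[OF sH sP])
  have sPH: "subgroup (P <#> H) G" by (rule subgroup_set_mult_normal[OF H sP])
  have n0: "order G \<noteq> 0" and h0: "card H \<noteq> 0"
    using card_subgroup_gt_0[OF fin] subgroup_self sH unfolding order_def by auto
  have "card (H \<inter> P) dvd card P" by (rule card_subgroup_dvd[OF fin sHP sP]) auto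
  then obtain c where c: "card (H \<inter> P) = p ^ c" using cP divides_primepow_nat[OF p] by auto
  have "p ^ c dvd card H" using card_subgroup_dvd[OF fin sHP sH] c by auto
  then have "c \<le> multiplicity p (card H)" using multiplicity_geI h0 p by (metis not_prime_unit)
  moreover have "multiplicity p (card H) \<le> c"
  proof (rule multiplicity_le_of_dvd[OF p n0 h0])
    show "card (P <#> H) dvd order G"
      using card_subgroup_dvd[OF fin sPH subgroup_self subgroup.subset[OF sPH]] unfolding order_def .
    show "card (P <#> H) * p ^ c = p ^ multiplicity p (order G) * card H"
      using card_set_mult_Int[OF fin sP sH] c cP by (simp add: Int_commute)
  qed
  ultimately show ?thesis using c by simp
qed

lemma sylow_Int_set_mult_eq:
  assumes fin: "finite (carrier G)" and p: "Factorial_Ring.prime p" and sP: "subgroup P G"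
    and cP: "card P = p ^ multiplicity p (order G)"
    and K: "K \<lhd> G" and H: "H \<lhd> G" and KH: "K \<subseteq> H" and fa: "factor_order H K = p ^ a"
  shows "(H \<inter> P) <#> K = H"
proof -
  have sK: "subgroup K G" and sH: "subgroup H G" using K H normal_imp_subgroup by auto
  have sHP: "subgroup (H \<inter> P) G" by (rule subgroups_Inter_pair[OF sH sP])
  have k0: "card K > 0" by (rule card_subgroup_gt_0[OF fin sK])
  have pe: "prime_elem p" using p by (rule prime_imp_prime_elem)
  have Hk: "card H = card K * p ^ a"
    using card_subgroup_dvd[OF fin sK sH KH] fa k0 unfolding factor_order_def by (auto elim!: dvdE)
  then have vH: "multiplicity p (card H) = multiplicity p (card K) + a"
    using k0 p by (simp add: prime_elem_multiplicity_mult_distrib[OF pe] pe)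
  have "H \<inter> P \<inter> K = K \<inter> P" using KH by blast
  then have "card ((H \<inter> P) <#> K) * card (K \<inter> P) = card (H \<inter> P) * card K"
    using card_set_mult_Int[OF fin sHP sK] by simp
  then have "card ((H \<inter> P) <#> K) * p ^ multiplicity p (card K)
      = p ^ multiplicity p (card K) * card H"
    using card_normal_Int_sylow[OF fin p sP cP] H K vH Hk by (simp add: power_add ac_simps)
  then have "card ((H \<inter> P) <#> K) = card H" using p by simp
  moreover have "(H \<inter> P) <#> K \<subseteq> H" using set_mult_subset_subgroup[OF sH] KH by blast
  moreover have "finite H" using subgroup.subset[OF sH] fin finite_subset by blast
  ultimately show ?thesis using card_subset_eq by metis
qed

definition factor_centralizer :: "'a set \<Rightarrow> 'a set \<Rightarrow> 'a set" where
  "factor_centralizer H K = {c \<in> carrier G. \<forall>h\<in>H. c \<otimes> h \<otimes> inv c \<otimes> inv h \<in> K}"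

lemma factor_centralizer_subgroup:
  assumes K: "K \<lhd> G" and H: "H \<lhd> G"
  shows "subgroup (factor_centralizer H K) G"
proof -
  have sK: "subgroup K G" using K normal_imp_subgroup by blast
  have Hc: "\<And>h. h \<in> H \<Longrightarrow> h \<in> carrier G" using normal_mem_carrier[OF H] .
  show ?thesis
  proof (rule subgroupI)
    show "factor_centralizer H K \<subseteq> carrier G" unfolding factor_centralizer_def by auto
    have "\<one> \<in> factor_centralizer H K" unfolding factor_centralizer_def using Hc subgroup.one_closed[OF sK] by auto
    then show "factor_centralizer H K \<noteq> {}" by blast
  next
    fix c assume c: "c \<in> factor_centralizer H K"
    have cc: "c \<in> carrier G" using c unfolding factor_centralizer_def by auto
    have "inv c \<otimes> h \<otimes> inv (inv c) \<otimes> inv h \<in> K" if h: "h \<in> H" for h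
    proof -
      define h' where "h' = inv c \<otimes> h \<otimes> c"
      have h'H: "h' \<in> H" unfolding h'_def using normal_conj_closed'[OF H cc h] .
      have k: "c \<otimes> h' \<otimes> inv c \<otimes> inv h' \<in> K" using c h'H unfolding factor_centralizer_def by auto
      have "c \<otimes> h' \<otimes> inv c \<otimes> inv h' = h \<otimes> inv h'" unfolding h'_def using cc Hc[OF h] by (simp add: group_cancel_simps)
      then have "inv (h \<otimes> inv h') \<in> K" using k subgroup.m_inv_closed[OF sK] by simp
      moreover have "inv (h \<otimes> inv h') = inv c \<otimes> h \<otimes> inv (inv c) \<otimes> inv h"
        unfolding h'_def using cc Hc[OF h] by (simp add: group_cancel_simps)
      ultimately show ?thesis by simp
    qed
    then show "inv c \<in> factor_centralizer H K" unfolding factor_centralizer_def using cc by auto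
  next
    fix c d assume c: "c \<in> factor_centralizer H K" and d: "d \<in> factor_centralizer H K"
    have cc: "c \<in> carrier G" and dc: "d \<in> carrier G" using c d unfolding factor_centralizer_def by auto
    have "c \<otimes> d \<otimes> h \<otimes> inv (c \<otimes> d) \<otimes> inv h \<in> K" if h: "h \<in> H" for h
    proof -
      have k2: "d \<otimes> h \<otimes> inv d \<otimes> inv h \<in> K" using d h unfolding factor_centralizer_def by auto
      have k1: "c \<otimes> h \<otimes> inv c \<otimes> inv h \<in> K" using c h unfolding factor_centralizer_def by auto
      have k3: "c \<otimes> (d \<otimes> h \<otimes> inv d \<otimes> inv h) \<otimes> inv c \<in> K" by (rule normal_conj_closed[OF K cc k2])
      have "(c \<otimes> (d \<otimes> h \<otimes> inv d \<otimes> inv h) \<otimes> inv c) \<otimes> (c \<otimes> h \<otimes> inv c \<otimes> inv h) \<in> K"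
        by (rule subgroup.m_closed[OF sK k3 k1])
      moreover have "(c \<otimes> (d \<otimes> h \<otimes> inv d \<otimes> inv h) \<otimes> inv c) \<otimes> (c \<otimes> h \<otimes> inv c \<otimes> inv h) = c \<otimes> d \<otimes> h \<otimes> inv (c \<otimes> d) \<otimes> inv h"
        using cc dc Hc[OF h] by (simp add: group_cancel_simps)
      ultimately show ?thesis by simp
    qed
    then show "c \<otimes> d \<in> factor_centralizer H K" unfolding factor_centralizer_def using cc dc by auto
  qed
qed

lemma factor_centralizer_normal:
  assumes K: "K \<lhd> G" and H: "H \<lhd> G"
  shows "factor_centralizer H K \<lhd> G"
proof -
  have Hc: "\<And>h. h \<in> H \<Longrightarrow> h \<in> carrier G" using normal_mem_carrier[OF H] .
  have "g \<otimes> c \<otimes> inv g \<in> factor_centralizer H K" if g: "g \<in> carrier G" and c: "c \<in> factor_centralizer H K" for g c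
  proof -
    have cc: "c \<in> carrier G" using c unfolding factor_centralizer_def by auto
    have "g \<otimes> c \<otimes> inv g \<otimes> h \<otimes> inv (g \<otimes> c \<otimes> inv g) \<otimes> inv h \<in> K" if h: "h \<in> H" for h
    proof -
      define h' where "h' = inv g \<otimes> h \<otimes> g"
      have h'H: "h' \<in> H" unfolding h'_def using normal_conj_closed'[OF H g h] .
      have k: "c \<otimes> h' \<otimes> inv c \<otimes> inv h' \<in> K" using c h'H unfolding factor_centralizer_def by auto
      have "g \<otimes> (c \<otimes> h' \<otimes> inv c \<otimes> inv h') \<otimes> inv g \<in> K" by (rule normal_conj_closed[OF K g k])
      moreover have "g \<otimes> (c \<otimes> h' \<otimes> inv c \<otimes> inv h') \<otimes> inv g = g \<otimes> c \<otimes> inv g \<otimes> h \<otimes> inv (g \<otimes> c \<otimes> inv g) \<otimes> inv h"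
        unfolding h'_def using cc g Hc[OF h] by (simp add: group_cancel_simps)
      ultimately show ?thesis by simp
    qed
    then show ?thesis unfolding factor_centralizer_def using g cc by auto
  qed
  then show ?thesis using factor_centralizer_subgroup[OF K H] normal_inv_iff by blast
qed

lemma abelian_subgroup_centralizes_factor:
  assumes K: "K \<lhd> G" and H: "H \<lhd> G" and sP: "subgroup P G"
    and comm: "comm_group (G\<lparr>carrier := P\<rparr>)" and HPK: "(H \<inter> P) <#> K = H"
  shows "P \<subseteq> factor_centralizer H K"
proof
  fix y assume y: "y \<in> P"
  have yc: "y \<in> carrier G" by (rule subgroup.mem_carrier[OF sP y])
  have "y \<otimes> h \<otimes> inv y \<otimes> inv h \<in> K" if h: "h \<in> H" for h
  proof -
    have "h \<in> (H \<inter> P) <#> K" using h HPK by simp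
    then obtain s k where sk: "s \<in> H \<inter> P" "k \<in> K" "h = s \<otimes> k" unfolding set_mult_iff by blast
    have sc: "s \<in> carrier G" using sk subgroup.mem_carrier[OF sP] by auto
    have kc: "k \<in> carrier G" using normal_mem_carrier[OF K sk(2)] .
    have "y \<otimes>\<^bsub>G\<lparr>carrier := P\<rparr>\<^esub> s = s \<otimes>\<^bsub>G\<lparr>carrier := P\<rparr>\<^esub> y"
      by (rule comm_monoid.m_comm[OF comm_group.axioms(1)[OF comm]]) (use y sk(1) in auto)
    then have ys: "y \<otimes> s = s \<otimes> y" by simp
    have sK: "subgroup K G" using K normal_imp_subgroup by blast
    have "y \<otimes> k \<otimes> inv y \<in> K" by (rule normal_conj_closed[OF K yc sk(2)])
    then have k1: "y \<otimes> k \<otimes> inv y \<otimes> inv k \<in> K"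
      by (rule subgroup.m_closed[OF sK _ subgroup.m_inv_closed[OF sK sk(2)]])
    have "s \<otimes> (y \<otimes> k \<otimes> inv y \<otimes> inv k) \<otimes> inv s \<in> K" by (rule normal_conj_closed[OF K sc k1])
    moreover have "s \<otimes> (y \<otimes> k \<otimes> inv y \<otimes> inv k) \<otimes> inv s = y \<otimes> h \<otimes> inv y \<otimes> inv h"
    proof -
      have "y \<otimes> h \<otimes> inv y \<otimes> inv h = (y \<otimes> s) \<otimes> (k \<otimes> inv y \<otimes> inv k \<otimes> inv s)"
        using sk(3) yc sc kc by (simp add: group_cancel_simps)
      also have "\<dots> = (s \<otimes> y) \<otimes> (k \<otimes> inv y \<otimes> inv k \<otimes> inv s)" using ys by simp
      also have "\<dots> = s \<otimes> (y \<otimes> k \<otimes> inv y \<otimes> inv k) \<otimes> inv s" using yc sc kc by (simp add: group_cancel_simps)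
      finally show ?thesis by simp
    qed
    ultimately show ?thesis by simp
  qed
  then show "y \<in> factor_centralizer H K" unfolding factor_centralizer_def using yc by auto
qed

text \<open>Modulo \<open>K\<close>, conjugation by \<open>c n\<close> with \<open>c\<close> centralizing \<open>H/K\<close> acts on \<open>M \<subseteq> H\<close>
  as conjugation by \<open>n\<close>.\<close>

lemma normal_set_mult_of_factorization:
  assumes K: "K \<lhd> G" and sN: "subgroup N G" and nM: "M \<lhd> G\<lparr>carrier := N\<rparr>" and MH: "M \<subseteq> H"
    and fact: "\<And>g. g \<in> carrier G \<Longrightarrow> \<exists>c\<in>factor_centralizer H K. \<exists>n\<in>N. g = c \<otimes> n"
  shows "M <#> K \<lhd> G"
proof -
  have sK: "subgroup K G" and sM: "subgroup M G"
    and Mc: "\<And>n m. n \<in> N \<Longrightarrow> m \<in> M \<Longrightarrow> n \<otimes> m \<otimes> inv n \<in> M"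
    using normal_imp_subgroup[OF K] nM normal_in_subgroup_iff[OF sN] by auto
  have "g \<otimes> x \<otimes> inv g \<in> M <#> K" if g: "g \<in> carrier G" and x: "x \<in> M <#> K" for g x
  proof -
    obtain m k where mk: "m \<in> M" "k \<in> K" "x = m \<otimes> k" using x unfolding set_mult_iff by blast
    obtain c n where cn: "c \<in> factor_centralizer H K" "n \<in> N" "g = c \<otimes> n" using fact[OF g] by blast
    have cc: "c \<in> carrier G" using cn(1) unfolding factor_centralizer_def by auto
    have nc: "n \<in> carrier G" by (rule subgroup.mem_carrier[OF sN cn(2)])
    have mc: "m \<in> carrier G" by (rule subgroup.mem_carrier[OF sM mk(1)])
    have kc: "k \<in> carrier G" by (rule normal_mem_carrier[OF K mk(2)])
    define m' where "m' = n \<otimes> m \<otimes> inv n"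
    have m'M: "m' \<in> M" unfolding m'_def by (rule Mc[OF cn(2) mk(1)])
    have m'c: "m' \<in> carrier G" by (rule subgroup.mem_carrier[OF sM m'M])
    have "c \<otimes> m' \<otimes> inv c \<otimes> inv m' \<in> K"
      using cn(1) m'M MH unfolding factor_centralizer_def by auto
    then have "inv m' \<otimes> (c \<otimes> m' \<otimes> inv c \<otimes> inv m') \<otimes> m' \<in> K" by (rule normal_conj_closed'[OF K m'c])
    then have kk: "(inv m' \<otimes> (c \<otimes> m' \<otimes> inv c \<otimes> inv m') \<otimes> m') \<otimes> (g \<otimes> k \<otimes> inv g) \<in> K"
      using subgroup.m_closed[OF sK _ normal_conj_closed[OF K g mk(2)]] by blast
    have "g \<otimes> x \<otimes> inv g = m' \<otimes> ((inv m' \<otimes> (c \<otimes> m' \<otimes> inv c \<otimes> inv m') \<otimes> m') \<otimes> (g \<otimes> k \<otimes> inv g))"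
      unfolding m'_def using mk(3) cn(3) cc nc mc kc by (simp add: group_cancel_simps)
    then show ?thesis unfolding set_mult_iff using m'M kk by blast
  qed
  then show ?thesis using normal_inv_iff subgroup_set_mult_normal[OF K sM] by blast
qed

lemma Int_normal_in_normalizer:
  assumes H: "H \<lhd> G" and sP: "subgroup P G"
  shows "H \<inter> P \<lhd> G\<lparr>carrier := normalizer G P\<rparr>"
proof -
  have sN: "subgroup (normalizer G P) G" by (rule normalizer_imp_subgroup[OF subgroup.subset[OF sP]])
  interpret N: group "G\<lparr>carrier := normalizer G P\<rparr>" by (rule subgroup_imp_group[OF sN])
  have nP: "P \<lhd> G\<lparr>carrier := normalizer G P\<rparr>" by (rule subgroup_in_normalizer[OF sP])
  then have "P \<subseteq> normalizer G P" using normal_in_subgroup_iff[OF sN] by blast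
  moreover have "H \<inter> normalizer G P \<inter> P \<lhd> G\<lparr>carrier := normalizer G P\<rparr>"
    by (rule N.normal_subgroup_intersect[OF normal_Int_subgroup[OF sN H] nP])
  moreover have "H \<inter> normalizer G P \<inter> P = H \<inter> P" using calculation(1) by blast
  ultimately show ?thesis by simp
qed

lemma factor_order_Int_eq:
  assumes fin: "finite (carrier G)" and sH: "subgroup H G" and sK: "subgroup K G" and sP: "subgroup P G"
    and KH: "K \<subseteq> H" and HPK: "(H \<inter> P) <#> K = H"
  shows "factor_order (H \<inter> P) (K \<inter> P) = factor_order H K"
proof -
  have sHP: "subgroup (H \<inter> P) G" and sKP: "subgroup (K \<inter> P) G"
    using subgroups_Inter_pair sH sK sP by auto
  have "H \<inter> P \<inter> K = K \<inter> P" using KH by blast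
  then have cc: "card H * card (K \<inter> P) = card (H \<inter> P) * card K"
    using card_set_mult_Int[OF fin sHP sK] HPK by simp
  obtain f where f: "card H = card K * f" using card_subgroup_dvd[OF fin sK sH KH] by (auto elim!: dvdE)
  have k0: "card K > 0" and k1: "card (K \<inter> P) > 0" using card_subgroup_gt_0[OF fin] sK sKP by auto
  have "card (H \<inter> P) = f * card (K \<inter> P)" using cc f k0 by (simp add: ac_simps)
  then show ?thesis unfolding factor_order_def using f k0 k1 by simp
qed

lemma Int_subset_of_set_mult_eq:
  assumes sP: "subgroup P G" and sM: "subgroup M G" and K: "K \<lhd> G"
    and MP: "M \<subseteq> P" and KPM: "K \<inter> P \<subseteq> M" and MKH: "M <#> K = H"
  shows "H \<inter> P \<subseteq> M"
proof
  fix s assume s: "s \<in> H \<inter> P"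
  then have "s \<in> M <#> K" using MKH by blast
  then obtain m k where mk: "m \<in> M" "k \<in> K" "s = m \<otimes> k" unfolding set_mult_iff by blast
  have mc: "m \<in> carrier G" and kc: "k \<in> carrier G"
    using subgroup.mem_carrier[OF sM mk(1)] normal_mem_carrier[OF K mk(2)] .
  have "k = inv m \<otimes> s" using mk(3) mc kc by simp
  moreover have "inv m \<otimes> s \<in> P"
    using subgroup.m_closed[OF sP subgroup.m_inv_closed[OF sP]] MP mk(1) s by blast
  ultimately have "k \<in> M" using mk(2) KPM by blast
  then show "s \<in> M" using mk subgroup.m_closed[OF sM] by simp
qed

lemma chief_factor_Int_normalizer:
  assumes ch: "chief_factor G H K" and sP: "subgroup P G"
    and HPK: "(H \<inter> P) <#> K = H"
    and fact: "\<And>g. g \<in> carrier G \<Longrightarrow> \<exists>c\<in>factor_centralizer H K. \<exists>n\<in>normalizer G P. g = c \<otimes> n"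
  shows "chief_factor (G\<lparr>carrier := normalizer G P\<rparr>) (H \<inter> P) (K \<inter> P)"
  unfolding chief_factor_def
proof (intro conjI)
  have K: "K \<lhd> G" and H: "H \<lhd> G" and KH: "K \<subset> H"
    and nomid: "\<And>N. N \<lhd> G \<Longrightarrow> K \<subset> N \<Longrightarrow> N \<subset> H \<Longrightarrow> False"
    using ch unfolding chief_factor_def by blast+
  have sN: "subgroup (normalizer G P) G" by (rule normalizer_imp_subgroup[OF subgroup.subset[OF sP]])
  have sK: "subgroup K G" by (rule normal_imp_subgroup[OF K])
  show "K \<inter> P \<lhd> G\<lparr>carrier := normalizer G P\<rparr>" "H \<inter> P \<lhd> G\<lparr>carrier := normalizer G P\<rparr>"
    using Int_normal_in_normalizer[OF _ sP] K H by auto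
  have "H \<inter> P \<noteq> K \<inter> P"
  proof
    assume "H \<inter> P = K \<inter> P"
    then have "H \<subseteq> K" using HPK set_mult_subset_subgroup[OF sK] by blast
    then show False using KH by blast
  qed
  then show "K \<inter> P \<subset> H \<inter> P" using KH by blast
  show "\<not> (\<exists>M. M \<lhd> G\<lparr>carrier := normalizer G P\<rparr> \<and> K \<inter> P \<subset> M \<and> M \<subset> H \<inter> P)"
  proof
    assume "\<exists>M. M \<lhd> G\<lparr>carrier := normalizer G P\<rparr> \<and> K \<inter> P \<subset> M \<and> M \<subset> H \<inter> P"
    then obtain M where nM: "M \<lhd> G\<lparr>carrier := normalizer G P\<rparr>" and KM: "K \<inter> P \<subset> M"
      and MH: "M \<subset> H \<inter> P" by blast
    have sM: "subgroup M G" using nM normal_in_subgroup_iff[OF sN] by blast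
    have nMK: "M <#> K \<lhd> G" by (rule normal_set_mult_of_factorization[OF K sN nM _ fact]) (use MH in auto)
    have MKH: "M <#> K \<subseteq> H"
      using set_mult_subset_subgroup[OF normal_imp_subgroup[OF H]] MH KH by blast
    obtain m where "m \<in> M" "m \<notin> K" using KM MH by blast
    then have "K \<subset> M <#> K"
      using subset_set_mult_subgroup_left[OF sM subgroup.subset[OF sK]]
        subset_set_mult_subgroup_right[OF sK subgroup.subset[OF sM]] by blast
    then have "M <#> K = H" using nomid[OF nMK] MKH by blast
    then have "H \<inter> P \<subseteq> M" using Int_subset_of_set_mult_eq[OF sP sM K] MH KM by blast
    then show False using MH by blast
  qed
qed

end

lemma cyclic_group_of_prime_order:
  assumes Q: "group Q" and fin: "finite (carrier Q)" and p: "Factorial_Ring.prime p"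
    and c: "card (carrier Q) = p"
  shows "cyclic_group Q"
proof -
  interpret Q: group Q by (rule Q)
  have p2: "p \<ge> 2" using p prime_ge_2_nat by blast
  have "carrier Q \<noteq> {\<one>\<^bsub>Q\<^esub>}" using c p2 by auto
  then obtain x where x: "x \<in> carrier Q" "x \<noteq> \<one>\<^bsub>Q\<^esub>" using Q.one_closed by blast
  have sg: "subgroup (generate Q {x}) Q" using Q.generate_is_subgroup x by auto
  have xg: "x \<in> generate Q {x}" using Q.generate_incl x(1) by (auto intro: generate.incl)
  have og: "\<one>\<^bsub>Q\<^esub> \<in> generate Q {x}" using subgroup.one_closed[OF sg] .
  have fing: "finite (generate Q {x})" using subgroup.subset[OF sg] fin finite_subset by blast
  have "{x, \<one>\<^bsub>Q\<^esub>} \<subseteq> generate Q {x}" using xg og by auto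
  then have "card {x, \<one>\<^bsub>Q\<^esub>} \<le> card (generate Q {x})" using fing card_mono by blast
  then have ge2: "card (generate Q {x}) \<ge> 2" using x(2) by simp
  have "card (generate Q {x}) dvd p"
    using Q.card_subgroup_dvd[OF fin sg Q.subgroup_self subgroup.subset[OF sg]] c by simp
  then have "card (generate Q {x}) = p" using ge2 p by (auto simp: prime_nat_iff)
  then have "generate Q {x} = carrier Q"
    using card_seteq[OF fin subgroup.subset[OF sg]] c by simp
  then have "subgroup_generated Q {x} = Q"
    unfolding subgroup_generated_def using x(1) by simp
  then show ?thesis unfolding cyclic_group_def using x(1) by blast
qed

context group begin

lemma cyclic_factor_group_of_prime_index:
  assumes fin: "finite (carrier G)" and sH: "subgroup H G" and K: "K \<lhd> G\<lparr>carrier := H\<rparr>"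
    and p: "Factorial_Ring.prime p" and fo: "factor_order H K = p"
  shows "cyclic_group ((G\<lparr>carrier := H\<rparr>) Mod K)"
proof -
  interpret GH: group "G\<lparr>carrier := H\<rparr>" by (rule subgroup_imp_group[OF sH])
  interpret NK: normal K "G\<lparr>carrier := H\<rparr>" by (rule K)
  have grp: "group ((G\<lparr>carrier := H\<rparr>) Mod K)" by (rule NK.factorgroup_is_group)
  have sK: "subgroup K (G\<lparr>carrier := H\<rparr>)" by (rule NK.subgroup_axioms)
  have lg: "card (rcosets\<^bsub>G\<lparr>carrier := H\<rparr>\<^esub> K) * card K = card H"
    using GH.lagrange[OF sK] unfolding order_def by simp
  have KH: "K \<subseteq> H" using subgroup.subset[OF sK] by simp
  have finH: "finite H" using subgroup.subset[OF sH] fin finite_subset by blast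
  have k0: "card K > 0" using finH KH subgroup.one_closed[OF sK] by (metis card_gt_0_iff empty_iff finite_subset)
  have cq: "card (carrier ((G\<lparr>carrier := H\<rparr>) Mod K)) = p"
  proof -
    have "card H div card K = card (rcosets\<^bsub>G\<lparr>carrier := H\<rparr>\<^esub> K)"
      using lg k0 by (metis div_mult_self_is_m)
    then show ?thesis using fo unfolding factor_order_def FactGroup_def by simp
  qed
  have "p > 0" using p prime_gt_0_nat by blast
  then have fq: "finite (carrier ((G\<lparr>carrier := H\<rparr>) Mod K))" using cq card_ge_0_finite by blast
  show ?thesis by (rule cyclic_group_of_prime_order[OF grp fq p cq])
qed

end

theorem mainTheorem2:
  fixes G :: "('a, 'b) monoid_scheme" and p :: nat and P :: "'a set"
  assumes "group G" and "finite (carrier G)" and "Factorial_Ring.prime p"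
    and "p_solvable p G"
    and "sylow_subgroup p G P"
    and "comm_group (G\<lparr>carrier := P\<rparr>)"
    and "p_supersolvable p (G\<lparr>carrier := normalizer G P\<rparr>)"
  shows "p_supersolvable p G"
  unfolding p_supersolvable_def
proof (intro allI impI)
  interpret group G by (rule assms(1))
  note fin = assms(2) and p = assms(3)
  fix H K assume "chief_factor G H K \<and> p dvd factor_order H K"
  then have ch: "chief_factor G H K" and dv: "p dvd factor_order H K" by auto
  have K: "K \<lhd> G" and H: "H \<lhd> G" and KH: "K \<subset> H" using ch unfolding chief_factor_def by blast+
  have sP: "subgroup P G" and cP: "card P = p ^ multiplicity p (order G)"
    using assms(5) unfolding sylow_subgroup_def by auto
  have sH: "subgroup H G" and sK: "subgroup K G" using H K normal_imp_subgroup by auto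
  obtain a where "factor_order H K = p ^ a" using chief_factor_prime_power[OF fin p assms(4) ch dv] by blast
  then have HPK: "(H \<inter> P) <#>\<^bsub>G\<^esub> K = H"
    using sylow_Int_set_mult_eq[OF fin p sP cP K H] KH by blast
  have "P \<subseteq> factor_centralizer H K" by (rule abelian_subgroup_centralizes_factor[OF K H sP assms(6) HPK])
  then have "chief_factor (G\<lparr>carrier := normalizer G P\<rparr>) (H \<inter> P) (K \<inter> P)"
    using chief_factor_Int_normalizer[OF ch sP HPK]
      frattini_argument[OF fin p sP cP factor_centralizer_normal[OF K H]] by blast
  moreover have "factor_order (H \<inter> P) (K \<inter> P) = factor_order H K"
    using factor_order_Int_eq[OF fin sH sK sP _ HPK] KH by blast
  ultimately have "factor_order H K = p" using assms(7) dv unfolding p_supersolvable_def by metis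
  moreover have "K \<lhd> G\<lparr>carrier := H\<rparr>"
    using normal_Int_subgroup[OF sH K] KH by (simp add: Int_absorb2)
  ultimately show "factor_order H K = p \<and> cyclic_group ((G\<lparr>carrier := H\<rparr>) Mod K)"
    using cyclic_factor_group_of_prime_index[OF fin sH _ p] by blast
qed

end
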